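(* For $n\in\{2,3,\ldots\}$ let $X_n$ be the minimal clade size in the Bolthausen-Sznitman $n$-coalescent. Then for every $k\in\mathbb{N}$, $$\frac{\log n}{n^k}E(X_n^k)\to\frac1k\quad\text{as } n\to\infty.$$
   Context: The Bolthausen-Sznitman $n$-coalescent $(\Pi^{(n)}_t)_{t\ge0}$ is the continuous-time Markov process on partitions of $[n]=\{1,\ldots,n\}$, started from singletons, whose only transitions are mergers of several blocks into one: when there are $b$ blocks, each given $k$-tuple of blocks ($2\le k\le b$) merges at rate $\frac{(k-2)!(b-k)!}{(b-1)!}$. For a partition $\eta$ let $C_i(\eta)$ be the block containing $i$. Let $I$ be uniform on $[n]$ independent of the coalescent, $E_n=\inf\{t\ge0:C_I(\Pi^{(n)}_t)\ne\{I\}\}$, and the minimal clade size $X_n=|C_I(\Pi^{(n)}_{E_n})|$. *)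

theory Defs
  imports Complex_Main
begin

text \<open>Bolthausen-Sznitman coalescent, described through its embedded jump chain.
A state is a partition of [n], represented as a set of blocks (nat set set).
With b blocks, each given set S of k blocks (2 <= k <= b) merges at rate
(k-2)!(b-k)!/(b-1)!.\<close>

definition bs_rate :: "nat \<Rightarrow> nat \<Rightarrow> real" where
  "bs_rate b k = fact (k - 2) * fact (b - k) / fact (b - 1)"

definition mergers :: "nat set set \<Rightarrow> nat set set set" where
  "mergers P = {S. S \<subseteq> P \<and> 2 \<le> card S}"

definition total_rate :: "nat set set \<Rightarrow> real" where
  "total_rate P = (\<Sum>S\<in>mergers P. bs_rate (card P) (card S))"

definition merge :: "nat set set \<Rightarrow> nat set set \<Rightarrow> nat set set" where
  "merge P S = insert (\<Union>S) (P - S)"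

definition jump_prob :: "nat set set \<Rightarrow> nat set set \<Rightarrow> real" where
  "jump_prob P S = bs_rate (card P) (card S) / total_rate P"

text \<open>clade_exp g m P i: expectation of g(size of the block containing i at the
first time the singleton block {i} is involved in a merger), for the coalescent
started at partition P (in which {i} is a block), following at most m jumps of
the jump chain (m jumps always suffice when m is at least the number of blocks).\<close>
fun clade_exp :: "(nat \<Rightarrow> real) \<Rightarrow> nat \<Rightarrow> nat set set \<Rightarrow> nat \<Rightarrow> real" where
  "clade_exp g 0 P i = 0"
| "clade_exp g (Suc m) P i =
     (\<Sum>S\<in>mergers P. jump_prob P S *
        (if {i} \<in> S then g (card (\<Union>S)) else clade_exp g m (merge P S) i))"

definition singletons :: "nat \<Rightarrow> nat set set" where
  "singletons n = (\<lambda>j. {j}) ` {1..n}"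

text \<open>E(g(X_n)), with I uniform on [n] independent of the coalescent.\<close>
definition min_clade_exp :: "nat \<Rightarrow> (nat \<Rightarrow> real) \<Rightarrow> real" where
  "min_clade_exp n g = (1 / real n) * (\<Sum>i\<in>{1..n}. clade_exp g n (singletons n) i)"

end

theory Submission
  imports Defs "HOL-Analysis.Harmonic_Numbers" "HOL-Real_Asymp.Real_Asymp"
begin

text \<open>The law of the minimal clade has a closed form. With \<open>r\<close> blocks besides \<open>{i}\<close>, the
  probability that the first merger involving \<open>{i}\<close> takes exactly a given set of \<open>j\<close> other
  blocks is \<open>a(r - j) (j - 1)! (r - j)! / r!\<close>, where \<open>a\<close> is the coefficient sequence of
  \<open>x / ((x - 1) ln (1 - x))\<close>: for the Bolthausen-Sznitman rates the first-step equations of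
  these weights reduce, via binomial sums of \<open>1 / (s (s - 1))\<close>, to the defining recurrence
  of \<open>a\<close>. Starting from singletons this gives
  \<open>E(X\<^sub>n\<^sup>k) = (\<Sum>j = 1..n - 1. a(n - 1 - j) (1 + j)\<^sup>k / j)\<close>.

  By Kaluza's theorem \<open>a\<close> is decreasing, and comparing its recurrence with harmonic numbers
  gives \<open>a(t) ln t \<longlonglongrightarrow> 1\<close>. The sum is dominated by the terms with \<open>j\<close> close to \<open>n\<close>,
  whose weights are \<open>\<approx> 1 / ln n\<close>; hence \<open>E(X\<^sub>n\<^sup>k) \<sim> n\<^sup>k / (k ln n)\<close>.\<close>

section \<open>Kaluza's theorem\<close>

lemma ratio_mono_if_log_convex:
  fixes c :: "nat \<Rightarrow> real"
  assumes pos: "\<And>n. c n > 0"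
    and log_convex: "\<And>n. c (Suc n) ^ 2 \<le> c n * c (Suc (Suc n))"
    and "m \<le> n"
  shows "c (Suc m) / c m \<le> c (Suc n) / c n"
  using \<open>m \<le> n\<close>
proof (induction n rule: dec_induct)
  case (step n)
  have "c (Suc n) / c n \<le> c (Suc (Suc n)) / c (Suc n)"
    using log_convex[of n] pos[of n] pos[of "Suc n"] by (simp add: divide_simps power2_eq_square mult.commute)
  with step.IH show ?case by linarith
qed simp

lemma kaluza_coeff_nonpos:
  fixes c d :: "nat \<Rightarrow> real"
  assumes pos: "\<And>n. c n > 0"
    and log_convex: "\<And>n. c (Suc n) ^ 2 \<le> c n * c (Suc (Suc n))"
    and d0: "d 0 \<ge> 0"
    and reciprocal: "\<And>m. (\<Sum>k\<le>Suc m. d k * c (Suc m - k)) = 0"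
    and "k \<ge> 1"
  shows "d k \<le> 0"
  using \<open>k \<ge> 1\<close>
proof (induction k rule: less_induct)
  case (less k)
  then obtain n where k: "k = Suc n" by (cases k) auto
  have "(\<Sum>j\<le>Suc n. d j * c (Suc n - j)) = (\<Sum>j\<le>n. d j * c (Suc n - j)) + d (Suc n) * c 0"
    by simp
  then have first: "d (Suc n) * c 0 = - (\<Sum>j\<le>n. d j * c (Suc n - j))"
    using reciprocal[of n] by linarith
  show ?case
  proof (cases n)
    case 0
    then have "d (Suc n) * c 0 \<le> 0" using first d0 pos[of 1] by simp
    then show ?thesis using pos[of 0] k by (simp add: mult_le_0_iff)
  next
    case (Suc m)
    define \<rho> where "\<rho> = c (Suc n) / c n"
    have prev: "(\<Sum>j\<le>n. d j * c (n - j)) = 0" using reciprocal[of m] Suc by simp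
    have "d (Suc n) * c 0 = \<rho> * (\<Sum>j\<le>n. d j * c (n - j)) - (\<Sum>j\<le>n. d j * c (Suc n - j))"
      using first prev by simp
    also have "\<dots> = (\<Sum>j\<le>n. d j * (\<rho> * c (n - j) - c (Suc n - j)))"
      by (simp add: sum_distrib_left sum_subtractf algebra_simps)
    also have "\<dots> \<le> 0"
    proof (rule sum_nonpos)
      fix j assume j: "j \<in> {..n}"
      show "d j * (\<rho> * c (n - j) - c (Suc n - j)) \<le> 0"
      proof (cases "j = 0")
        case True
        then show ?thesis using pos[of n] by (simp add: \<rho>_def)
      next
        case False
        have "c (Suc (n - j)) / c (n - j) \<le> \<rho>"
          unfolding \<rho>_def using pos log_convex by (rule ratio_mono_if_log_convex) simp
        then have "c (Suc n - j) \<le> \<rho> * c (n - j)"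
          using j pos[of "n - j"] by (simp add: Suc_diff_le divide_simps)
        moreover have "d j \<le> 0" using less.IH[of j] False j k by simp
        ultimately show ?thesis by (simp add: mult_nonpos_nonneg)
      qed
    qed
    finally show ?thesis using pos[of 0] k by (simp add: mult_le_0_iff)
  qed
qed

section \<open>The coefficients of \<open>x / ((x - 1) ln (1 - x))\<close>\<close>

fun clade_coeff :: "nat \<Rightarrow> real" where
  "clade_coeff t = 1 - (\<Sum>i<t. clade_coeff i / real (Suc (t - i)))"

declare clade_coeff.simps[simp del]

lemma clade_coeff_convolution: "(\<Sum>i\<le>t. clade_coeff i / real (Suc (t - i))) = 1"
proof -
  have "(\<Sum>i\<le>t. clade_coeff i / real (Suc (t - i)))
      = (\<Sum>i<t. clade_coeff i / real (Suc (t - i))) + clade_coeff t"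
    by (simp add: lessThan_Suc_atMost[symmetric])
  also have "\<dots> = 1" by (subst (2) clade_coeff.simps) simp
  finally show ?thesis .
qed

lemma clade_coeff_0: "clade_coeff 0 = 1"
  by (subst clade_coeff.simps) simp

lemma clade_coeff_recurrence:
  "real (Suc t) * clade_coeff t
     = 1 + (\<Sum>u<t. real u * clade_coeff u / (real (t - u) * real (Suc (t - u))))"
proof (cases t)
  case 0
  then show ?thesis by (simp add: clade_coeff_0)
next
  case (Suc s)
  have this_t: "(\<Sum>u<t. clade_coeff u / real (Suc (t - u))) = 1 - clade_coeff t"
    using clade_coeff_convolution[of t] by (simp add: lessThan_Suc_atMost[symmetric] Suc)
  have prev_t: "(\<Sum>u<t. clade_coeff u / real (t - u)) = 1"
    using clade_coeff_convolution[of s] by (simp add: lessThan_Suc_atMost[symmetric] Suc_diff_le Suc)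
  have "(\<Sum>u<t. real u * clade_coeff u / (real (t - u) * real (Suc (t - u))))
      = (\<Sum>u<t. real t * (clade_coeff u / real (t - u))
                 - real (Suc t) * (clade_coeff u / real (Suc (t - u))))"
  proof (rule sum.cong[OF refl])
    fix u assume "u \<in> {..<t}"
    then have pos: "real (t - u) > 0" and t_eq: "real t = real (t - u) + real u"
      and Suc_eq: "real (Suc (t - u)) = real (t - u) + 1" by auto
    show "real u * clade_coeff u / (real (t - u) * real (Suc (t - u)))
        = real t * (clade_coeff u / real (t - u)) - real (Suc t) * (clade_coeff u / real (Suc (t - u)))"
      unfolding Suc_eq of_nat_Suc t_eq using pos by (simp add: field_simps)
  qed
  also have "\<dots> = real t * (\<Sum>u<t. clade_coeff u / real (t - u))
                    - real (Suc t) * (\<Sum>u<t. clade_coeff u / real (Suc (t - u)))"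
    by (simp only: sum_subtractf sum_distrib_left)
  also have "\<dots> = real t - real (Suc t) * (1 - clade_coeff t)"
    by (simp only: this_t prev_t mult_1_right)
  finally show ?thesis by (simp add: algebra_simps)
qed

lemma clade_coeff_ge: "clade_coeff t \<ge> 1 / real (Suc t)"
proof (induction t rule: less_induct)
  case (less t)
  have "\<And>u. u < t \<Longrightarrow> clade_coeff u \<ge> 0"
    using less by (smt (verit) divide_nonneg_nonneg of_nat_0_le_iff)
  then have "(\<Sum>u<t. real u * clade_coeff u / (real (t - u) * real (Suc (t - u)))) \<ge> 0"
    by (intro sum_nonneg) simp
  then have "real (Suc t) * clade_coeff t \<ge> 1" using clade_coeff_recurrence[of t] by simp
  then show ?case by (simp add: field_simps)
qed

lemma clade_coeff_nonneg: "clade_coeff t \<ge> 0"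
  using clade_coeff_ge[of t] by (smt (verit) divide_nonneg_nonneg of_nat_0_le_iff)

lemma clade_coeff_Suc_le: "clade_coeff (Suc t) \<le> clade_coeff t"
proof -
  \<comment> \<open>The differences of \<open>clade_coeff\<close> are the coefficients of \<open>1 / (\<Sum>l. x\<^sup>l / (l + 1))\<close>.\<close>
  define c :: "nat \<Rightarrow> real" where "c l = 1 / real (Suc l)" for l
  define d where "d k = (if k = 0 then 1 else clade_coeff k - clade_coeff (k - 1))" for k
  have conv: "(\<Sum>i\<le>t. clade_coeff i * c (t - i)) = 1" for t
    using clade_coeff_convolution[of t] by (simp add: c_def)
  have "(\<Sum>k\<le>Suc m. d k * c (Suc m - k)) = 0" for m
  proof -
    have "(\<Sum>k\<le>Suc m. d k * c (Suc m - k))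
        = c (Suc m) + (\<Sum>k\<le>m. clade_coeff (Suc k) * c (m - k)) - (\<Sum>k\<le>m. clade_coeff k * c (m - k))"
      unfolding sum.atMost_Suc_shift by (simp add: d_def algebra_simps sum_subtractf)
    also have "c (Suc m) + (\<Sum>k\<le>m. clade_coeff (Suc k) * c (m - k))
        = (\<Sum>k\<le>Suc m. clade_coeff k * c (Suc m - k))"
      unfolding sum.atMost_Suc_shift by (simp add: clade_coeff_0)
    finally show ?thesis by (simp add: conv)
  qed
  moreover have "c (Suc n) ^ 2 \<le> c n * c (Suc (Suc n))" for n
  proof -
    have "real (Suc n) * real (Suc (Suc (Suc n))) \<le> real (Suc (Suc n)) ^ 2"
      by (simp add: power2_eq_square algebra_simps)
    then show ?thesis
      by (simp add: c_def power_one_over frac_le del: of_nat_Suc)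
  qed
  ultimately have "d (Suc t) \<le> 0"
    by (intro kaluza_coeff_nonpos[of c d]) (auto simp: c_def d_def)
  then show ?thesis by (simp add: d_def)
qed

lemma clade_coeff_antimono: "i \<le> j \<Longrightarrow> clade_coeff j \<le> clade_coeff i"
  by (induction j rule: dec_induct) (auto intro: order_trans[OF clade_coeff_Suc_le])

lemma clade_coeff_le_1: "clade_coeff t \<le> 1"
  using clade_coeff_antimono[of 0 t] by (simp add: clade_coeff_0)

lemma sum_inverse_Suc_diff: "(\<Sum>i\<le>t. 1 / real (Suc (t - i))) = harm (Suc t)"
proof (induction t)
  case 0
  then show ?case by (simp add: harm_def)
next
  case (Suc t)
  have "(\<Sum>i\<le>Suc t. 1 / real (Suc (Suc t - i))) = 1 / real (Suc (Suc t)) + (\<Sum>i\<le>t. 1 / real (Suc (t - i)))"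
    unfolding sum.atMost_Suc_shift by simp
  also have "\<dots> = 1 / real (Suc (Suc t)) + harm (Suc t)" by (simp only: Suc.IH)
  also have "\<dots> = harm (Suc (Suc t))" by (simp add: harm_Suc[of "Suc t"] inverse_eq_divide)
  finally show ?case .
qed

lemma sum_inverse_Suc_diff_atLeastAtMost:
  assumes "K \<le> m"
  shows "(\<Sum>i=K..m. 1 / real (Suc (m - i))) = harm (Suc (m - K))"
proof -
  obtain d where d: "m = K + d" using assms le_Suc_ex by blast
  have "(\<Sum>i=K..m. 1 / real (Suc (m - i))) = (\<Sum>i=0+K..d+K. 1 / real (Suc (m - i)))"
    using d by (simp add: add.commute)
  also have "\<dots> = (\<Sum>i\<le>d. 1 / real (Suc (d - i)))"
    unfolding sum.shift_bounds_cl_nat_ivl using d by (simp add: atLeast0AtMost)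
  finally show ?thesis using sum_inverse_Suc_diff d by simp
qed

lemma harm_le_1_plus_ln: "n > 0 \<Longrightarrow> harm n \<le> 1 + ln (real n)"
  using euler_mascheroni_sequence_decreasing[of 1 n] by (simp add: harm_def)

lemma clade_coeff_mult_harm_le: "clade_coeff t * harm (Suc t) \<le> 1"
proof -
  have "clade_coeff t * harm (Suc t) = (\<Sum>i\<le>t. clade_coeff t / real (Suc (t - i)))"
    by (simp add: sum_inverse_Suc_diff[symmetric] sum_distrib_left)
  also have "\<dots> \<le> (\<Sum>i\<le>t. clade_coeff i / real (Suc (t - i)))"
    by (rule sum_mono) (auto intro!: divide_right_mono clade_coeff_antimono)
  finally show ?thesis by (simp only: clade_coeff_convolution)
qed

lemma clade_coeff_le_inverse_ln: "clade_coeff t \<le> 1 / ln (real t + 2)"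
proof -
  have "ln (real t + 2) \<le> harm (Suc t)" using harm_ge_ln[of "Suc t"] by (simp add: add.commute)
  then have "clade_coeff t * ln (real t + 2) \<le> clade_coeff t * harm (Suc t)"
    using clade_coeff_nonneg by (simp add: mult_left_mono)
  also have "\<dots> \<le> 1" by (rule clade_coeff_mult_harm_le)
  finally show ?thesis by (simp add: field_simps)
qed

text \<open>In the convolution identity at \<open>m = K R\<close>, the terms \<open>i < K\<close> contribute at most
  \<open>1 / (R - 1)\<close>, and the remaining ones at most \<open>clade_coeff K\<close> times a harmonic number.\<close>
lemma clade_coeff_ge_inverse_ln:
  assumes K: "K \<ge> 1" and R: "R \<ge> 2"
  shows "clade_coeff K \<ge> (1 - 1 / (real R - 1)) / (1 + ln (real (K * R) + 1))"
proof -
  define m where "m = K * R"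
  have Km: "K \<le> m" using K R by (simp add: m_def)
  have "1 = (\<Sum>i\<le>m. clade_coeff i / real (Suc (m - i)))" by (rule clade_coeff_convolution[symmetric])
  also have "{..m} = {..<K} \<union> {K..m}" using Km by auto
  also have "(\<Sum>i\<in>{..<K} \<union> {K..m}. clade_coeff i / real (Suc (m - i)))
      = (\<Sum>i<K. clade_coeff i / real (Suc (m - i))) + (\<Sum>i=K..m. clade_coeff i / real (Suc (m - i)))"
    by (rule sum.union_disjoint) auto
  also have "(\<Sum>i<K. clade_coeff i / real (Suc (m - i))) \<le> (\<Sum>i<K. 1 / (real K * (real R - 1)))"
  proof (rule sum_mono)
    fix i assume "i \<in> {..<K}"
    then have i: "real i < real K" and "i \<le> m" using Km by auto
    then have "real (Suc (m - i)) = real K * real R - real i + 1" by (simp add: m_def of_nat_diff)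
    then have "real K * (real R - 1) \<le> real (Suc (m - i))" using i by (simp add: algebra_simps)
    moreover have "real K * (real R - 1) > 0" using K R by simp
    ultimately show "clade_coeff i / real (Suc (m - i)) \<le> 1 / (real K * (real R - 1))"
      using clade_coeff_nonneg[of i] clade_coeff_le_1[of i] by (intro frac_le) auto
  qed
  also have "(\<Sum>i<K. 1 / (real K * (real R - 1))) = 1 / (real R - 1)" using K by simp
  also have "(\<Sum>i=K..m. clade_coeff i / real (Suc (m - i))) \<le> (\<Sum>i=K..m. clade_coeff K / real (Suc (m - i)))"
    by (rule sum_mono) (auto intro!: divide_right_mono clade_coeff_antimono)
  also have "\<dots> = clade_coeff K * (\<Sum>i=K..m. 1 / real (Suc (m - i)))"
    by (simp add: sum_distrib_left)
  also have "\<dots> = clade_coeff K * harm (Suc (m - K))"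
    by (simp only: sum_inverse_Suc_diff_atLeastAtMost[OF Km])
  also have "harm (Suc (m - K)) \<le> 1 + ln (real (K * R) + 1)"
  proof -
    have "harm (Suc (m - K)) \<le> 1 + ln (real (Suc (m - K)))" by (rule harm_le_1_plus_ln) simp
    also have "\<dots> \<le> 1 + ln (real (K * R) + 1)"
    proof -
      have "real (Suc (m - K)) \<le> real (K * R) + 1" using Km by (simp add: m_def)
      then show ?thesis by simp
    qed
    finally show ?thesis .
  qed
  finally have "1 \<le> 1 / (real R - 1) + clade_coeff K * (1 + ln (real (K * R) + 1))"
    using clade_coeff_nonneg[of K] by (smt (verit) mult_left_mono)
  moreover have "1 + ln (real (K * R) + 1) > 0" by (smt (verit) ln_ge_zero of_nat_0_le_iff)
  ultimately show ?thesis by (simp add: field_simps)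
qed

text \<open>This is \<open>clade_coeff_ge_inverse_ln\<close> with \<open>R \<approx> ln K\<close>.\<close>
lemma ln_mult_clade_coeff_ge:
  assumes K: "K \<ge> 1"
  shows "ln (real K) * (1 - 1 / (ln (real K) + 1)) / (1 + ln (real K * (ln (real K) + 3) + 1))
       \<le> ln (real K) * clade_coeff K"
proof -
  define L where "L = ln (real K)"
  have L: "L \<ge> 0" using K by (simp add: L_def)
  define R where "R = nat \<lceil>L\<rceil> + 2"
  have R: "R \<ge> 2" "L + 2 \<le> real R" "real R \<le> L + 3"
    using L by (simp_all add: R_def) linarith
  have "real (K * R) + 1 \<le> real K * (L + 3) + 1" using R(3) by (simp add: mult_left_mono)
  then have "ln (real (K * R) + 1) \<le> ln (real K * (L + 3) + 1)"
    by (simp add: add_pos_nonneg del: of_nat_mult)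
  moreover have "1 - 1 / (L + 1) \<le> 1 - 1 / (real R - 1)" "0 \<le> 1 - 1 / (L + 1)"
    using R L by (simp_all add: frac_le field_simps)
  moreover have "0 < 1 + ln (real (K * R) + 1)" by (smt (verit) ln_ge_zero of_nat_0_le_iff)
  ultimately have "(1 - 1 / (L + 1)) / (1 + ln (real K * (L + 3) + 1))
      \<le> (1 - 1 / (real R - 1)) / (1 + ln (real (K * R) + 1))"
    by (intro frac_le) auto
  also have "\<dots> \<le> clade_coeff K" by (rule clade_coeff_ge_inverse_ln[OF K R(1)])
  finally have "L * ((1 - 1 / (L + 1)) / (1 + ln (real K * (L + 3) + 1))) \<le> L * clade_coeff K"
    using L by (rule mult_left_mono)
  then show ?thesis unfolding L_def[symmetric] by simp
qed

lemma ln_mult_clade_coeff_tendsto: "(\<lambda>K. ln (real K) * clade_coeff K) \<longlonglongrightarrow> 1"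
proof (rule tendsto_sandwich)
  show "(\<lambda>K. ln (real K) * (1 - 1 / (ln (real K) + 1)) / (1 + ln (real K * (ln (real K) + 3) + 1)))
          \<longlonglongrightarrow> 1"
    by real_asymp
  show "(\<lambda>K. ln (real K) / ln (real K + 2)) \<longlonglongrightarrow> 1"
    by real_asymp
  show "\<forall>\<^sub>F K in sequentially. ln (real K) * (1 - 1 / (ln (real K) + 1))
          / (1 + ln (real K * (ln (real K) + 3) + 1)) \<le> ln (real K) * clade_coeff K"
    using eventually_ge_at_top[of 1] by eventually_elim (rule ln_mult_clade_coeff_ge)
  show "\<forall>\<^sub>F K in sequentially. ln (real K) * clade_coeff K \<le> ln (real K) / ln (real K + 2)"
    using eventually_ge_at_top[of 1]
  proof eventually_elim
    case (elim K)
    then show ?case using clade_coeff_le_inverse_ln[of K] mult_left_mono by fastforce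
  qed
qed

section \<open>Moment sums\<close>

lemma add_one_pow_Suc_ge: "(x::real) \<ge> 0 \<Longrightarrow> x ^ Suc q + real (Suc q) * x ^ q \<le> (x + 1) ^ Suc q"
proof (induction q)
  case 0 then show ?case by simp
next
  case (Suc q)
  have "(x + 1) ^ Suc (Suc q) = (x + 1) * (x + 1) ^ Suc q" by simp
  also have "\<dots> \<ge> (x + 1) * (x ^ Suc q + real (Suc q) * x ^ q)"
    using Suc by (intro mult_left_mono) auto
  finally have "(x + 1) ^ Suc (Suc q)
      \<ge> x ^ Suc (Suc q) + real (Suc q) * x ^ Suc q + x ^ Suc q + real (Suc q) * x ^ q"
    by (simp add: algebra_simps)
  moreover have "real (Suc q) * x ^ q \<ge> 0" using Suc by simp
  ultimately show ?case by (simp add: algebra_simps)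
qed

lemma add_one_pow_Suc_le: "(y::real) \<ge> 0 \<Longrightarrow> (y + 1) ^ Suc q \<le> y ^ Suc q + real (Suc q) * (y + 1) ^ q"
proof (induction q)
  case 0 then show ?case by simp
next
  case (Suc q)
  have "(y + 1) ^ Suc (Suc q) = (y + 1) * (y + 1) ^ Suc q" by simp
  also have "\<dots> \<le> (y + 1) * (y ^ Suc q + real (Suc q) * (y + 1) ^ q)"
    using Suc by (intro mult_left_mono) auto
  also have "\<dots> = y ^ Suc (Suc q) + y ^ Suc q + real (Suc q) * (y + 1) ^ Suc q"
    by (simp add: algebra_simps)
  also have "y ^ Suc q \<le> (y + 1) ^ Suc q" using Suc by (intro power_mono) auto
  finally show ?case by (simp add: algebra_simps)
qed

lemma sum_shifted_powers_ge: "real (Suc q) * (\<Sum>j\<in>{1..<n}. (1 + real j) ^ q) \<ge> real n ^ Suc q - 1"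
proof (induction n)
  case 0 then show ?case by simp
next
  case (Suc n)
  show ?case
  proof (cases "n = 0")
    case True then show ?thesis by simp
  next
    case False
    then have "(\<Sum>j\<in>{1..<Suc n}. (1 + real j) ^ q) = (\<Sum>j\<in>{1..<n}. (1 + real j) ^ q) + (1 + real n) ^ q"
      by (simp add: sum.atLeastLessThan_Suc)
    moreover have "(real n + 1) ^ Suc q \<le> real n ^ Suc q + real (Suc q) * (real n + 1) ^ q"
      by (rule add_one_pow_Suc_le) simp
    ultimately show ?thesis using Suc by (simp add: algebra_simps)
  qed
qed

lemma sum_shifted_powers_le: "real (Suc q) * (\<Sum>j\<in>{1..<n}. (1 + real j) ^ q) \<le> (real n + 1) ^ Suc q"
proof (induction n)
  case 0 then show ?case by simp
next
  case (Suc n)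
  show ?case
  proof (cases "n = 0")
    case True then show ?thesis by simp
  next
    case False
    then have "(\<Sum>j\<in>{1..<Suc n}. (1 + real j) ^ q) = (\<Sum>j\<in>{1..<n}. (1 + real j) ^ q) + (1 + real n) ^ q"
      by (simp add: sum.atLeastLessThan_Suc)
    moreover have "(real n + 1) ^ Suc q + real (Suc q) * (real n + 1) ^ q \<le> (real n + 1 + 1) ^ Suc q"
      by (rule add_one_pow_Suc_ge) simp
    ultimately show ?thesis using Suc by (simp add: algebra_simps)
  qed
qed

definition moment_sum :: "nat \<Rightarrow> nat \<Rightarrow> real" where
  "moment_sum k n = (\<Sum>j\<in>{1..<n}. (1 + real j) ^ k / real j)"

lemma moment_sum_nonneg: "moment_sum k n \<ge> 0" unfolding moment_sum_def by (rule sum_nonneg) simp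

lemma moment_sum_ge: "moment_sum (Suc q) n \<ge> (real n ^ Suc q - 1) / real (Suc q)"
proof -
  have "moment_sum (Suc q) n \<ge> (\<Sum>j\<in>{1..<n}. (1 + real j) ^ q)"
    unfolding moment_sum_def
  proof (rule sum_mono)
    fix j assume "j \<in> {1..<n}"
    then have j: "j \<ge> 1" by simp
    have "(1 + real j) ^ Suc q / real j = (1 + real j) ^ q * ((1 + real j) / real j)" by simp
    moreover have "(1 + real j) / real j \<ge> 1" using j by simp
    moreover have "(1 + real j) ^ q \<ge> 0" by simp
    ultimately have "(1 + real j) ^ q * 1 \<le> (1 + real j) ^ Suc q / real j"
      by (metis mult_left_mono)
    then show "(1 + real j) ^ q \<le> (1 + real j) ^ Suc q / real j" by simp
  qed
  moreover have "(\<Sum>j\<in>{1..<n}. (1 + real j) ^ q) \<ge> (real n ^ Suc q - 1) / real (Suc q)"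
    using sum_shifted_powers_ge[where q=q and n=n] by (simp add: field_simps)
  ultimately show ?thesis by linarith
qed

lemma moment_sum_le: assumes "n \<ge> 1"
  shows "moment_sum (Suc q) n \<le> (real n + 1) ^ Suc q / real (Suc q) + real n ^ q * (1 + ln (real n))"
proof -
  have "moment_sum (Suc q) n = (\<Sum>j\<in>{1..<n}. (1 + real j) ^ q + (1 + real j) ^ q / real j)"
    unfolding moment_sum_def
  proof (rule sum.cong[OF refl])
    fix j assume "j \<in> {1..<n}"
    then have j: "j \<ge> 1" by simp
    show "(1 + real j) ^ Suc q / real j = (1 + real j) ^ q + (1 + real j) ^ q / real j"
      using j by (simp add: field_simps)
  qed
  also have "\<dots> \<le> (\<Sum>j\<in>{1..<n}. (1 + real j) ^ q + real n ^ q * (1 / real j))"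
  proof (rule sum_mono)
    fix j assume "j \<in> {1..<n}"
    then have j: "j \<ge> 1" "j < n" by auto
    have "(1 + real j) ^ q \<le> real n ^ q" using j by (intro power_mono) auto
    then have "(1 + real j) ^ q / real j \<le> real n ^ q / real j" using j by (simp add: divide_right_mono)
    then show "(1 + real j) ^ q + (1 + real j) ^ q / real j
        \<le> (1 + real j) ^ q + real n ^ q * (1 / real j)" by simp
  qed
  also have "\<dots> = (\<Sum>j\<in>{1..<n}. (1 + real j) ^ q) + real n ^ q * (\<Sum>j\<in>{1..<n}. 1 / real j)"
    by (simp add: sum.distrib sum_distrib_left)
  also have "(\<Sum>j\<in>{1..<n}. 1 / real j) \<le> 1 + ln (real n)"
  proof -
    have "(\<Sum>j\<in>{1..<n}. 1 / real j) \<le> (\<Sum>j\<in>{1..n}. 1 / real j)"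
      by (rule sum_mono2) auto
    also have "\<dots> = harm n" by (simp add: harm_def inverse_eq_divide)
    also have "\<dots> \<le> 1 + ln (real n)" using assms by (intro harm_le_1_plus_ln) simp
    finally show ?thesis .
  qed
  also have "(\<Sum>j\<in>{1..<n}. (1 + real j) ^ q) \<le> (real n + 1) ^ Suc q / real (Suc q)"
    using sum_shifted_powers_le[where q=q and n=n] by (simp add: field_simps)
  finally show ?thesis by (simp add: mult_left_mono)
qed

lemma moment_sum_normalized_ge:
  assumes "n \<ge> 1"
  shows "(1 - (1 / real n) ^ Suc q) / real (Suc q) \<le> moment_sum (Suc q) n / real n ^ Suc q"
proof -
  define x where "x = real n ^ Suc q"
  have "x > 0" using assms by (simp add: x_def)
  then have "(1 - 1 / x) / real (Suc q) = ((x - 1) / real (Suc q)) / x"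
    by (simp add: field_simps)
  then have "(1 - (1 / real n) ^ Suc q) / real (Suc q) = ((real n ^ Suc q - 1) / real (Suc q)) / real n ^ Suc q"
    by (simp add: x_def power_one_over)
  also have "\<dots> \<le> moment_sum (Suc q) n / real n ^ Suc q"
    by (rule divide_right_mono[OF moment_sum_ge]) simp
  finally show ?thesis .
qed

lemma moment_sum_normalized_le:
  assumes "n \<ge> 1"
  shows "moment_sum (Suc q) n / real n ^ Suc q
       \<le> (1 + 1 / real n) ^ Suc q / real (Suc q) + (1 + ln (real n)) / real n"
proof -
  have n: "real n > 0" using assms by simp
  have "moment_sum (Suc q) n / real n ^ Suc q
      \<le> ((real n + 1) ^ Suc q / real (Suc q) + real n ^ q * (1 + ln (real n))) / real n ^ Suc q"
    by (rule divide_right_mono[OF moment_sum_le[OF assms]]) simp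
  also have "\<dots> = ((real n + 1) ^ Suc q / real n ^ Suc q) / real (Suc q)
                    + real n ^ q * (1 + ln (real n)) / (real n * real n ^ q)"
    by (simp add: add_divide_distrib)
  also have "\<dots> = ((real n + 1) / real n) ^ Suc q / real (Suc q) + (1 + ln (real n)) / real n"
    using n by (simp add: power_divide)
  also have "(real n + 1) / real n = 1 + 1 / real n" using n by (simp add: field_simps)
  finally show ?thesis .
qed

lemma moment_sum_asymp: "(\<lambda>n. moment_sum (Suc q) n / real n ^ Suc q) \<longlonglongrightarrow> 1 / real (Suc q)"
proof (rule tendsto_sandwich)
  have inverse: "(\<lambda>n. 1 / real n) \<longlonglongrightarrow> 0" by real_asymp
  have "(\<lambda>n. (1 - (1 / real n) ^ Suc q) / real (Suc q)) \<longlonglongrightarrow> (1 - 0 ^ Suc q) / real (Suc q)"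
    by (intro tendsto_intros inverse) simp
  then show "(\<lambda>n. (1 - (1 / real n) ^ Suc q) / real (Suc q)) \<longlonglongrightarrow> 1 / real (Suc q)" by simp
  have "(\<lambda>n. (1 + ln (real n)) / real n) \<longlonglongrightarrow> 0" by real_asymp
  then have "(\<lambda>n. (1 + 1 / real n) ^ Suc q / real (Suc q) + (1 + ln (real n)) / real n)
      \<longlonglongrightarrow> (1 + 0) ^ Suc q / real (Suc q) + 0"
    by (intro tendsto_intros inverse) simp
  then show "(\<lambda>n. (1 + 1 / real n) ^ Suc q / real (Suc q) + (1 + ln (real n)) / real n)
      \<longlonglongrightarrow> 1 / real (Suc q)" by simp
  show "\<forall>\<^sub>F n in sequentially.
      (1 - (1 / real n) ^ Suc q) / real (Suc q) \<le> moment_sum (Suc q) n / real n ^ Suc q"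
    using eventually_ge_at_top[of 1] by eventually_elim (rule moment_sum_normalized_ge)
  show "\<forall>\<^sub>F n in sequentially. moment_sum (Suc q) n / real n ^ Suc q
      \<le> (1 + 1 / real n) ^ Suc q / real (Suc q) + (1 + ln (real n)) / real n"
    using eventually_ge_at_top[of 1] by eventually_elim (rule moment_sum_normalized_le)
qed

definition weighted_moment_sum :: "nat \<Rightarrow> nat \<Rightarrow> real" where
  "weighted_moment_sum k n = (\<Sum>j\<in>{1..<n}. clade_coeff (n - 1 - j) * ((1 + real j) ^ k / real j))"

lemma weighted_moment_sum_ge: "weighted_moment_sum k n \<ge> clade_coeff n * moment_sum k n"
  unfolding weighted_moment_sum_def moment_sum_def sum_distrib_left
proof (rule sum_mono)
  fix j assume "j \<in> {1..<n}"
  have "clade_coeff n \<le> clade_coeff (n - 1 - j)" by (rule clade_coeff_antimono) simp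
  moreover have "(1 + real j) ^ k / real j \<ge> 0" by simp
  ultimately show "clade_coeff n * ((1 + real j) ^ k / real j)
      \<le> clade_coeff (n - 1 - j) * ((1 + real j) ^ k / real j)"
    by (rule mult_right_mono)
qed

lemma shifted_power_ratio_le: "1 \<le> j \<Longrightarrow> j < n \<Longrightarrow> (1 + real j) ^ Suc q / real j \<le> 2 ^ Suc q * real n ^ q"
proof -
  assume j: "1 \<le> j" "j < n"
  have "(1 + real j) ^ Suc q \<le> (2 * real j) ^ Suc q" using j by (intro power_mono) auto
  then have "(1 + real j) ^ Suc q / real j \<le> (2 * real j) ^ Suc q / real j"
    by (rule divide_right_mono) simp
  also have "\<dots> = 2 ^ Suc q * real j ^ q"
  proof -
    have e: "(2 * real j) ^ Suc q = 2 ^ Suc q * real j ^ q * real j"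
      by (simp only: power_mult_distrib power_Suc mult_ac)
    have g: "\<And>x c :: real. x \<noteq> 0 \<Longrightarrow> c * x / x = c" by simp
    show ?thesis unfolding e using g j by simp
  qed
  also have "\<dots> \<le> 2 ^ Suc q * real n ^ q" using j by (intro mult_left_mono power_mono) auto
  finally show ?thesis .
qed

lemma weighted_moment_sum_le:
  assumes n: "n \<ge> 1"
  shows "weighted_moment_sum (Suc q) n
       \<le> real N * (2 ^ Suc q * real n ^ q) + clade_coeff N * moment_sum (Suc q) n"
proof -
  define f where "f j = (1 + real j) ^ Suc q / real j" for j
  define c where "c = 2 ^ Suc q * real n ^ q"
  define T where "T = {j \<in> {1..<n}. n - 1 - j < N}"
  have f_nonneg: "f j \<ge> 0" for j by (simp add: f_def)
  have "clade_coeff (n - 1 - j) * f j \<le> (if j \<in> T then c else 0) + clade_coeff N * f j"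
    if j: "j \<in> {1..<n}" for j
  proof (cases "j \<in> T")
    case True
    have "clade_coeff (n - 1 - j) * f j \<le> f j"
      using clade_coeff_le_1 clade_coeff_nonneg f_nonneg by (simp add: mult_left_le_one_le)
    also have "\<dots> \<le> c" using shifted_power_ratio_le j by (simp add: f_def c_def)
    moreover have "0 \<le> clade_coeff N * f j" using clade_coeff_nonneg f_nonneg by simp
    ultimately show ?thesis using True by simp
  next
    case False
    then have "clade_coeff (n - 1 - j) \<le> clade_coeff N"
      using j by (intro clade_coeff_antimono) (auto simp: T_def)
    then show ?thesis using False f_nonneg[of j] by (simp add: mult_right_mono)
  qed
  then have "weighted_moment_sum (Suc q) n \<le> (\<Sum>j\<in>{1..<n}. (if j \<in> T then c else 0) + clade_coeff N * f j)"
    unfolding weighted_moment_sum_def f_def[symmetric] by (rule sum_mono)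
  also have "\<dots> = real (card T) * c + clade_coeff N * moment_sum (Suc q) n"
    by (simp add: sum.distrib sum_distrib_left moment_sum_def f_def sum.If_cases T_def Int_def)
  also have "card T \<le> N"
  proof -
    have "T \<subseteq> {n - N..<n}" by (auto simp: T_def)
    then have "card T \<le> card {n - N..<n}" by (intro card_mono) auto
    then show ?thesis by simp
  qed
  then have "real (card T) * c \<le> real N * c" by (intro mult_right_mono) (auto simp: c_def)
  finally show ?thesis by (simp add: c_def)
qed

text \<open>Split the sum at \<open>N \<approx> n / ln\<^sup>2 n\<close>: the \<open>N\<close> terms with \<open>n - 1 - j < N\<close> are
  \<open>O(N n\<^sup>q)\<close> in total, and all other weights are at most \<open>clade_coeff N \<approx> 1 / ln n\<close>.\<close>
lemma weighted_moment_sum_normalized_le: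
  assumes n: "n \<ge> 1" and L: "ln (real n) > 1" and x: "real n / ln (real n) ^ 2 > 1"
  shows "ln (real n) / real n ^ Suc q * weighted_moment_sum (Suc q) n
       \<le> 2 ^ Suc q / ln (real n)
         + ln (real n) / ln (real n / ln (real n) ^ 2) * (moment_sum (Suc q) n / real n ^ Suc q)"
proof -
  define L where "L = ln (real n)"
  define x where "x = real n / L ^ 2"
  define N where "N = nat \<lfloor>x\<rfloor>"
  have L1: "L > 1" and x1: "x > 1" using L x by (simp_all add: L_def x_def)
  have N: "real N \<le> x" "x \<le> real N + 2" using x1 by (simp_all add: N_def) linarith
  have "clade_coeff N \<le> 1 / ln (real N + 2)" by (rule clade_coeff_le_inverse_ln)
  also have "\<dots> \<le> 1 / ln x" using N x1 by (simp add: frac_le)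
  finally have aN: "L * clade_coeff N \<le> L / ln x" using L1 by (simp add: mult_left_mono divide_inverse)
  have np: "real n ^ Suc q > 0" using n by simp
  have "L / real n ^ Suc q * weighted_moment_sum (Suc q) n
      \<le> L / real n ^ Suc q * (real N * (2 ^ Suc q * real n ^ q) + clade_coeff N * moment_sum (Suc q) n)"
    using weighted_moment_sum_le[OF n, of q N] L1 np by (intro mult_left_mono) auto
  also have "\<dots> = 2 ^ Suc q * (real N * L / real n)
                  + (L * clade_coeff N) * (moment_sum (Suc q) n / real n ^ Suc q)"
    using n by (simp add: field_simps)
  also have "real N * L / real n \<le> 1 / L"
  proof -
    have "real N * L \<le> x * L" using N L1 by (simp add: mult_right_mono)
    also have "x * L = real n / L" using L1 by (simp add: x_def power2_eq_square)
    finally show ?thesis using n L1 by (simp add: field_simps)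
  qed
  also have "(L * clade_coeff N) * (moment_sum (Suc q) n / real n ^ Suc q)
      \<le> L / ln x * (moment_sum (Suc q) n / real n ^ Suc q)"
    using aN moment_sum_nonneg np by (intro mult_right_mono) auto
  finally show ?thesis by (simp add: L_def x_def)
qed

lemma weighted_moment_sum_asymp:
  "(\<lambda>n. ln (real n) / real n ^ Suc q * weighted_moment_sum (Suc q) n) \<longlonglongrightarrow> 1 / real (Suc q)"
proof (rule tendsto_sandwich)
  show "(\<lambda>n. (ln (real n) * clade_coeff n) * (moment_sum (Suc q) n / real n ^ Suc q)) \<longlonglongrightarrow> 1 / real (Suc q)"
    using tendsto_mult[OF ln_mult_clade_coeff_tendsto moment_sum_asymp[of q]] by simp
  have "(\<lambda>n. 1 / ln (real n)) \<longlonglongrightarrow> 0" "(\<lambda>n. ln (real n) / ln (real n / ln (real n) ^ 2)) \<longlonglongrightarrow> 1"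
    by real_asymp+
  from tendsto_add[OF tendsto_mult_left[OF this(1)] tendsto_mult[OF this(2) moment_sum_asymp]]
  show "(\<lambda>n. 2 ^ Suc q / ln (real n)
            + ln (real n) / ln (real n / ln (real n) ^ 2) * (moment_sum (Suc q) n / real n ^ Suc q))
          \<longlonglongrightarrow> 1 / real (Suc q)"
    by simp
  show "\<forall>\<^sub>F n in sequentially. (ln (real n) * clade_coeff n) * (moment_sum (Suc q) n / real n ^ Suc q)
      \<le> ln (real n) / real n ^ Suc q * weighted_moment_sum (Suc q) n"
    using eventually_ge_at_top[of 1]
  proof eventually_elim
    case (elim n)
    then have "ln (real n) / real n ^ Suc q * (clade_coeff n * moment_sum (Suc q) n)
        \<le> ln (real n) / real n ^ Suc q * weighted_moment_sum (Suc q) n"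
      using weighted_moment_sum_ge by (intro mult_left_mono) auto
    then show ?case by (simp add: field_simps)
  qed
  have "\<forall>\<^sub>F n in sequentially. ln (real n) > 1" "\<forall>\<^sub>F n in sequentially. real n / ln (real n) ^ 2 > 1"
    by real_asymp+
  with eventually_ge_at_top[of 1]
  show "\<forall>\<^sub>F n in sequentially. ln (real n) / real n ^ Suc q * weighted_moment_sum (Suc q) n
      \<le> 2 ^ Suc q / ln (real n)
         + ln (real n) / ln (real n / ln (real n) ^ 2) * (moment_sum (Suc q) n / real n ^ Suc q)"
    by eventually_elim (rule weighted_moment_sum_normalized_le)
qed

section \<open>Merger weights\<close>

lemma fact_Suc_Suc_real:
  "(fact (Suc (Suc v)) :: real) = real (Suc (Suc v)) * (real (Suc (Suc v)) - 1) * fact v"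
  by (simp add: fact_Suc algebra_simps)

lemma bs_rate_Suc_Suc: "bs_rate (Suc r) (Suc j) = fact (j - 1) * fact (r - j) / fact r"
  by (simp add: bs_rate_def)

lemma binomial_mult_bs_rate:
  assumes "2 \<le> s" "s \<le> b"
  shows "real (b choose s) * bs_rate b s = real b / (real s * (real s - 1))"
proof -
  obtain v where v: "s = Suc (Suc v)" using assms(1) by (metis add_2_eq_Suc le_Suc_ex)
  obtain u where u: "b = s + u" using assms(2) le_Suc_ex by blast
  have C: "real (b choose s) = fact b / (fact s * fact u)" using u by (simp add: binomial_fact)
  have B: "bs_rate b s = fact v * fact u / fact (b - 1)" using u v by (simp add: bs_rate_def)
  have fb: "(fact b :: real) = real b * fact (b - 1)" using u v by (simp add: fact_reduce)
  have fs: "(fact s :: real) = real s * (real s - 1) * fact v" using v fact_Suc_Suc_real by simp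
  have "real s - 1 \<noteq> 0" "real s \<noteq> 0" using v by auto
  then show ?thesis unfolding C B fb fs by (simp add: field_simps)
qed

lemma sum_inverse_pronic:
  assumes "1 \<le> b"
  shows "(\<Sum>s=2..b. 1 / (real s * (real s - 1))) = 1 - 1 / real b"
  using assms
proof (induction b rule: dec_induct)
  case (step n)
  have "{2..Suc n} = insert (Suc n) {2..n}" using step.hyps by auto
  then have "(\<Sum>s=2..Suc n. 1 / (real s * (real s - 1)))
      = 1 / (real (Suc n) * real n) + (1 - 1 / real n)"
    using step by simp
  also have "\<dots> = 1 - 1 / real (Suc n)"
  proof -
    have "real n > 0" using step.hyps by simp
    then have "real n + real n * real n \<noteq> 0" by (smt (verit) mult_pos_pos)
    with \<open>real n > 0\<close> show ?thesis by (simp add: field_simps)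
  qed
  finally show ?case .
qed simp

text \<open>With \<open>r\<close> blocks besides \<open>{i}\<close>, the probability that the first merger involving
  \<open>{i}\<close> absorbs exactly a given set of \<open>j\<close> of them.\<close>
definition merge_weight :: "nat \<Rightarrow> nat \<Rightarrow> real" where
  "merge_weight r j = clade_coeff (r - j) * bs_rate (Suc r) (Suc j)"

lemma merge_weight_fact: "merge_weight r j = clade_coeff (r - j) * fact (j - 1) * fact (r - j) / fact r"
  by (simp add: merge_weight_def bs_rate_Suc_Suc)

lemma binomial_mult_merge_weight_inside:
  assumes "2 \<le> s" "s \<le> j" "j \<le> r"
  shows "real (j choose s) * (bs_rate (Suc r) s / real r * merge_weight (r - s + 1) (j - s + 1))
       = bs_rate (Suc r) (Suc j) / real r * (real j * clade_coeff (r - j)) / (real s * (real s - 1))"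
proof -
  obtain v where v: "s = Suc (Suc v)" using assms(1) by (metis add_2_eq_Suc le_Suc_ex)
  obtain u where u: "j = s + u" using assms(2) le_Suc_ex by blast
  obtain t where t: "r = j + t" using assms(3) le_Suc_ex by blast
  have C: "real (j choose s) = fact j / (fact s * fact u)" using u by (simp add: binomial_fact)
  have B: "bs_rate (Suc r) s = fact v * fact (Suc (u + t)) / fact r"
    using u v t by (simp add: bs_rate_def)
  have W: "merge_weight (r - s + 1) (j - s + 1) = clade_coeff t * fact u * fact t / fact (Suc (u + t))"
    using u v t by (simp add: merge_weight_fact)
  have K: "bs_rate (Suc r) (Suc j) = fact (j - 1) * fact t / fact r" using t by (simp add: bs_rate_Suc_Suc)
  have fj: "(fact j :: real) = real j * fact (j - 1)" using u v by (simp add: fact_reduce)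
  have fs: "(fact s :: real) = real s * (real s - 1) * fact v" using v fact_Suc_Suc_real by simp
  have rt: "r - j = t" using t by simp
  have nz: "real s - 1 \<noteq> 0" "real s \<noteq> 0" "real r \<noteq> 0" using v t u by auto
  \<comment> \<open>Stated over abstract reals so that \<open>field_simps\<close> cannot unfold the factorials.\<close>
  have field_identity: "\<And>j F1 s1 s2 fv fu G Fr r a ft :: real.
      s1 \<noteq> 0 \<Longrightarrow> s2 \<noteq> 0 \<Longrightarrow> fv \<noteq> 0 \<Longrightarrow> fu \<noteq> 0 \<Longrightarrow> G \<noteq> 0 \<Longrightarrow> Fr \<noteq> 0 \<Longrightarrow> r \<noteq> 0 \<Longrightarrow>
      (j * F1) / ((s1 * s2 * fv) * fu) * (fv * G / Fr / r * (a * fu * ft / G))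
        = F1 * ft / Fr / r * (j * a) / (s1 * s2)"
    by (simp add: field_simps)
  show ?thesis unfolding C B W K fj fs rt by (rule field_identity) (use nz in auto)
qed

lemma binomial_mult_merge_weight_outside:
  assumes "1 \<le> j" "2 \<le> s" "s \<le> r - j" "j \<le> r"
  shows "real ((r - j) choose s) * (bs_rate (Suc r) s / real r * merge_weight (r - s + 1) j)
       = bs_rate (Suc r) (Suc j) / real r
           * (clade_coeff (r - j - s + 1) * real (r - j - s + 1)) / (real s * (real s - 1))"
proof -
  obtain v where v: "s = Suc (Suc v)" using assms(2) by (metis add_2_eq_Suc le_Suc_ex)
  obtain w where w: "r - j = s + w" using assms(3) le_Suc_ex by blast
  obtain i where i: "j = Suc i" using assms(1) by (cases j) auto
  have r: "r = Suc i + s + w" using w i assms(4) by simp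
  have C: "real ((r - j) choose s) = fact (r - j) / (fact s * fact w)" using w by (simp add: binomial_fact)
  have B: "bs_rate (Suc r) s = fact v * fact (Suc (Suc i + w)) / fact r"
    using r v by (simp add: bs_rate_def)
  have W: "merge_weight (r - s + 1) j
      = clade_coeff (Suc w) * fact i * (real (Suc w) * fact w) / fact (Suc (Suc i + w))"
    using r v i by (simp add: merge_weight_fact fact_Suc)
  have K: "bs_rate (Suc r) (Suc j) = fact i * fact (r - j) / fact r" using i by (simp add: bs_rate_Suc_Suc)
  have e: "r - j - s + 1 = Suc w" using w by simp
  have fs: "(fact s :: real) = real s * (real s - 1) * fact v" using v fact_Suc_Suc_real by simp
  have nz: "real s - 1 \<noteq> 0" "real s \<noteq> 0" "real r \<noteq> 0" using v r by auto
  have field_identity: "\<And>H s1 s2 fv fw G Fr r a fi w1 :: real.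
      s1 \<noteq> 0 \<Longrightarrow> s2 \<noteq> 0 \<Longrightarrow> fv \<noteq> 0 \<Longrightarrow> fw \<noteq> 0 \<Longrightarrow> G \<noteq> 0 \<Longrightarrow> Fr \<noteq> 0 \<Longrightarrow> r \<noteq> 0 \<Longrightarrow>
      H / ((s1 * s2 * fv) * fw) * (fv * G / Fr / r * (a * fi * (w1 * fw) / G))
        = fi * H / Fr / r * (a * w1) / (s1 * s2)"
    by (simp add: field_simps)
  show ?thesis unfolding C B W K e fs by (rule field_identity) (use nz in auto)
qed

lemma clade_coeff_recurrence_pronic:
  "(\<Sum>s=2..t. clade_coeff (t - s + 1) * real (t - s + 1) / (real s * (real s - 1)))
     = real (Suc t) * clade_coeff t - 1"
proof -
  have "(\<Sum>s=2..t. clade_coeff (t - s + 1) * real (t - s + 1) / (real s * (real s - 1)))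
      = (\<Sum>u\<in>{1..<t}. real u * clade_coeff u / (real (t - u) * real (Suc (t - u))))"
  proof (rule sum.reindex_bij_witness[where i = "\<lambda>u. t + 1 - u" and j = "\<lambda>s. t + 1 - s"])
    fix s assume s: "s \<in> {2..t}"
    then have "real (s - 1) = real s - 1" "t - (t + 1 - s) = s - 1" "t + 1 - s = t - s + 1"
      "Suc (t - (t + 1 - s)) = s" by auto
    then show "real (t + 1 - s) * clade_coeff (t + 1 - s)
          / (real (t - (t + 1 - s)) * real (Suc (t - (t + 1 - s))))
        = clade_coeff (t - s + 1) * real (t - s + 1) / (real s * (real s - 1))"
      by (simp add: field_simps)
  qed auto
  also have "\<dots> = (\<Sum>u<t. real u * clade_coeff u / (real (t - u) * real (Suc (t - u))))"
  proof -
    have "{..<t} = insert 0 {1..<t}" if "t > 0" using that by auto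
    then show ?thesis by (cases "t = 0") auto
  qed
  also have "\<dots> = real (Suc t) * clade_coeff t - 1" using clade_coeff_recurrence[of t] by simp
  finally show ?thesis .
qed

text \<open>The first-step equation for \<open>merge_weight r j\<close>, grouped by the size \<open>s\<close> of the first
  merger: either \<open>{i}\<close> merges with the \<open>j\<close> blocks directly, or \<open>s\<close> of them merge among
  themselves, or \<open>s\<close> of the other \<open>r - j\<close> blocks do.\<close>
lemma merge_weight_first_step_by_size:
  assumes j: "1 \<le> j" "j \<le> r"
  shows "bs_rate (Suc r) (Suc j) / real r
      + (\<Sum>s=2..j. real (j choose s) * (bs_rate (Suc r) s / real r * merge_weight (r - s + 1) (j - s + 1)))
      + (\<Sum>s=2..r - j. real ((r - j) choose s) * (bs_rate (Suc r) s / real r * merge_weight (r - s + 1) j))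
      = merge_weight r j"
proof -
  define t where "t = r - j"
  define K where "K = bs_rate (Suc r) (Suc j) / real r"
  have inside: "(\<Sum>s=2..j. real (j choose s) * (bs_rate (Suc r) s / real r * merge_weight (r - s + 1) (j - s + 1)))
      = K * (real j * clade_coeff t) * (\<Sum>s=2..j. 1 / (real s * (real s - 1)))"
    unfolding sum_distrib_left
  proof (rule sum.cong[OF refl])
    fix s assume "s \<in> {2..j}"
    then have "real (j choose s) * (bs_rate (Suc r) s / real r * merge_weight (r - s + 1) (j - s + 1))
        = K * (real j * clade_coeff t) / (real s * (real s - 1))"
      using binomial_mult_merge_weight_inside[of s j r] j by (simp add: K_def t_def)
    then show "real (j choose s) * (bs_rate (Suc r) s / real r * merge_weight (r - s + 1) (j - s + 1))
        = K * (real j * clade_coeff t) * (1 / (real s * (real s - 1)))" by simp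
  qed
  have outside: "(\<Sum>s=2..r - j. real ((r - j) choose s) * (bs_rate (Suc r) s / real r * merge_weight (r - s + 1) j))
      = K * (\<Sum>s=2..t. clade_coeff (t - s + 1) * real (t - s + 1) / (real s * (real s - 1)))"
    unfolding sum_distrib_left t_def
  proof (rule sum.cong[OF refl])
    fix s assume "s \<in> {2..r - j}"
    then show "real ((r - j) choose s) * (bs_rate (Suc r) s / real r * merge_weight (r - s + 1) j)
        = K * (clade_coeff (r - j - s + 1) * real (r - j - s + 1) / (real s * (real s - 1)))"
      using binomial_mult_merge_weight_outside[of j s r] j by (simp add: K_def)
  qed
  have "K + K * (real j * clade_coeff t) * (1 - 1 / real j) + K * (real (Suc t) * clade_coeff t - 1)
      = K * (real r * clade_coeff t)"
    using j by (simp add: t_def field_simps of_nat_diff)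
  also have "\<dots> = merge_weight r j"
    using j by (simp add: K_def t_def merge_weight_def)
  finally show ?thesis
    unfolding inside outside sum_inverse_pronic[OF j(1)] clade_coeff_recurrence_pronic K_def .
qed

section \<open>Mergers of block families\<close>

definition block_family :: "nat set set \<Rightarrow> bool" where
  "block_family P \<longleftrightarrow> finite P \<and> (\<forall>B\<in>P. finite B \<and> B \<noteq> {}) \<and> (\<forall>B\<in>P. \<forall>C\<in>P. B \<noteq> C \<longrightarrow> B \<inter> C = {})"

definition blocks_card :: "nat set set \<Rightarrow> nat" where
  "blocks_card J = (\<Sum>B\<in>J. card B)"

lemma card_Union_block_family:
  assumes "block_family P" "S \<subseteq> P"
  shows "card (\<Union>S) = blocks_card S"
  unfolding blocks_card_def
proof (rule card_Union_disjoint)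
  show "pairwise disjnt S"
    using assms unfolding block_family_def pairwise_def disjnt_def by blast
  show "\<And>A. A \<in> S \<Longrightarrow> finite A"
    using assms unfolding block_family_def by blast
qed

lemma finite_subsets: "finite A \<Longrightarrow> finite {S. S \<subseteq> A \<and> Q S}"
  by (rule rev_finite_subset[OF finite_Pow_iff[THEN iffD2]]) auto

lemma sum_subsets_by_card:
  assumes "finite A"
  shows "(\<Sum>S\<in>{S. S \<subseteq> A \<and> Q (card S)}. h (card S))
       = (\<Sum>s\<in>{s. s \<le> card A \<and> Q s}. real (card A choose s) * h s)"
proof -
  let ?X = "{S. S \<subseteq> A \<and> Q (card S)}" and ?T = "{s. s \<le> card A \<and> Q s}"
  have "card ` ?X \<subseteq> ?T" using assms by (auto intro: card_mono)
  then have "(\<Sum>S\<in>?X. h (card S)) = (\<Sum>s\<in>?T. \<Sum>S\<in>{S \<in> ?X. card S = s}. h (card S))"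
    using finite_subsets[OF assms] by (intro sum.group[symmetric]) auto
  also have "\<dots> = (\<Sum>s\<in>?T. real (card A choose s) * h s)"
  proof (rule sum.cong[OF refl])
    fix s assume "s \<in> ?T"
    then have "{S \<in> ?X. card S = s} = {S. S \<subseteq> A \<and> card S = s}" by auto
    then show "(\<Sum>S\<in>{S \<in> ?X. card S = s}. h (card S)) = real (card A choose s) * h s"
      using n_subsets[OF assms, of s] by simp
  qed
  finally show ?thesis .
qed

lemma mergers_eq: "mergers P = {S. S \<subseteq> P \<and> 2 \<le> card S}"
  by (simp add: mergers_def)

lemma sum_mergers_by_card:
  assumes "finite A"
  shows "(\<Sum>S\<in>mergers A. h (card S)) = (\<Sum>s=2..card A. real (card A choose s) * h s)"
proof -
  have "{s. s \<le> card A \<and> 2 \<le> s} = {2..card A}" by auto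
  then show ?thesis
    using sum_subsets_by_card[OF assms, where Q = "\<lambda>s. 2 \<le> s" and h = h] by (simp add: mergers_eq)
qed

lemma total_rate_eq:
  assumes "finite P" "card P \<ge> 1"
  shows "total_rate P = real (card P) - 1"
proof -
  have "total_rate P = (\<Sum>s=2..card P. real (card P choose s) * bs_rate (card P) s)"
    unfolding total_rate_def by (rule sum_mergers_by_card[OF assms(1)])
  also have "\<dots> = (\<Sum>s=2..card P. real (card P) * (1 / (real s * (real s - 1))))"
    by (rule sum.cong[OF refl]) (simp add: binomial_mult_bs_rate)
  also have "\<dots> = real (card P) * (1 - 1 / real (card P))"
    by (simp only: sum_distrib_left[symmetric] sum_inverse_pronic[OF assms(2)])
  also have "\<dots> = real (card P) - 1" using assms(2) by (simp add: field_simps)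
  finally show ?thesis .
qed

lemma sum_mergers_inside_outside:
  assumes "finite A" "J \<subseteq> A"
  shows "(\<Sum>S\<in>mergers A. if S \<subseteq> J then X (card S) else if S \<inter> J = {} then Y (card S) else 0)
    = (\<Sum>s=2..card J. real (card J choose s) * X s)
      + (\<Sum>s=2..card A - card J. real ((card A - card J) choose s) * Y s)"
proof -
  have fin: "finite (mergers A)" using finite_subsets[OF assms(1)] by (simp add: mergers_eq)
  have "(\<Sum>S\<in>mergers A. if S \<subseteq> J then X (card S) else if S \<inter> J = {} then Y (card S) else 0)
      = (\<Sum>S\<in>mergers A. (if S \<subseteq> J then X (card S) else 0) + (if S \<inter> J = {} then Y (card S) else 0))"
  proof (rule sum.cong[OF refl])
    fix S assume "S \<in> mergers A"
    then have "S \<noteq> {}" by (auto simp: mergers_eq)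
    then show "(if S \<subseteq> J then X (card S) else if S \<inter> J = {} then Y (card S) else 0)
        = (if S \<subseteq> J then X (card S) else 0) + (if S \<inter> J = {} then Y (card S) else 0)" by auto
  qed
  also have "\<dots> = (\<Sum>S\<in>{S \<in> mergers A. S \<subseteq> J}. X (card S)) + (\<Sum>S\<in>{S \<in> mergers A. S \<inter> J = {}}. Y (card S))"
    by (simp add: sum.distrib sum.inter_filter[OF fin])
  also have "{S \<in> mergers A. S \<subseteq> J} = mergers J" using assms(2) by (auto simp: mergers_eq)
  also have "{S \<in> mergers A. S \<inter> J = {}} = mergers (A - J)" by (auto simp: mergers_eq)
  finally show ?thesis
    using assms by (simp add: sum_mergers_by_card card_Diff_subset finite_subset)
qed

text \<open>Once the blocks in \<open>S\<close> have merged, the sets of blocks are the images of the old sets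
  \<open>J\<close> that contain \<open>S\<close> or avoid it.\<close>
definition weight_after_merge :: "nat \<Rightarrow> nat set set \<Rightarrow> nat set set \<Rightarrow> real" where
  "weight_after_merge r S J =
     (if S \<subseteq> J then merge_weight (r - card S + 1) (card J - card S + 1)
      else if S \<inter> J = {} then merge_weight (r - card S + 1) (card J) else 0)"

lemma merge_weight_first_step:
  assumes "finite A" "J \<subseteq> A" "J \<noteq> {}"
  shows "bs_rate (Suc (card A)) (Suc (card J)) / real (card A)
      + (\<Sum>S\<in>mergers A. bs_rate (Suc (card A)) (card S) / real (card A) * weight_after_merge (card A) S J)
      = merge_weight (card A) (card J)"
proof -
  define r where "r = card A"
  define j where "j = card J"
  have j: "1 \<le> j" "j \<le> r"
    using assms finite_subset[OF assms(2,1)] card_mono[OF assms(1,2)]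
    by (auto simp: j_def r_def Suc_le_eq card_gt_0_iff)
  define X where "X s = bs_rate (Suc r) s / real r * merge_weight (r - s + 1) (j - s + 1)" for s
  define Y where "Y s = bs_rate (Suc r) s / real r * merge_weight (r - s + 1) j" for s
  have "(\<Sum>S\<in>mergers A. bs_rate (Suc r) (card S) / real r * weight_after_merge r S J)
      = (\<Sum>S\<in>mergers A. if S \<subseteq> J then X (card S) else if S \<inter> J = {} then Y (card S) else 0)"
    by (rule sum.cong[OF refl]) (simp add: weight_after_merge_def X_def Y_def j_def)
  also have "\<dots> = (\<Sum>s=2..j. real (j choose s) * X s) + (\<Sum>s=2..r - j. real ((r - j) choose s) * Y s)"
    unfolding r_def j_def by (rule sum_mergers_inside_outside[OF assms(1,2)])
  finally show ?thesis
    using merge_weight_first_step_by_size[OF j] by (simp add: X_def Y_def r_def j_def add.assoc)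
qed

lemma sum_subsets_after_merge:
  assumes "S \<subseteq> A" "S \<noteq> {}" "U \<notin> A"
  shows "(\<Sum>J'\<in>{J'. J' \<subseteq> insert U (A - S) \<and> J' \<noteq> {}}. F J')
       = (\<Sum>J\<in>{J. J \<subseteq> A \<and> J \<noteq> {} \<and> (S \<subseteq> J \<or> S \<inter> J = {})}.
            F (if S \<subseteq> J then insert U (J - S) else J))"
proof -
  let ?merged = "\<lambda>J. if S \<subseteq> J then insert U (J - S) else J"
  let ?split = "\<lambda>J'. if U \<in> J' then J' - {U} \<union> S else J'"
  show ?thesis
  proof (rule sum.reindex_bij_witness[where i = ?merged and j = ?split])
    fix J' assume J': "J' \<in> {J'. J' \<subseteq> insert U (A - S) \<and> J' \<noteq> {}}"
    show "?split J' \<in> {J. J \<subseteq> A \<and> J \<noteq> {} \<and> (S \<subseteq> J \<or> S \<inter> J = {})}"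
      using J' assms by auto
    show merged_split: "?merged (?split J') = J'"
    proof (cases "U \<in> J'")
      case True
      then show ?thesis using J' by auto
    next
      case False
      then have "\<not> S \<subseteq> J'" using J' assms(2) by auto
      with False show ?thesis by simp
    qed
    show "F (?merged (?split J')) = F J'" by (simp only: merged_split)
  next
    fix J assume J: "J \<in> {J. J \<subseteq> A \<and> J \<noteq> {} \<and> (S \<subseteq> J \<or> S \<inter> J = {})}"
    then have "U \<notin> J" using assms(3) by auto
    then show "?split (?merged J) = J" by auto
    show "?merged J \<in> {J'. J' \<subseteq> insert U (A - S) \<and> J' \<noteq> {}}" using J by auto
  qed
qed

locale merger =
  fixes P :: "nat set set" and i :: nat and S :: "nat set set"
  assumes block_family: "block_family P" and singleton_in: "{i} \<in> P"
    and subset: "S \<subseteq> P - {{i}}" and two_le_card: "2 \<le> card S"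
begin

lemma finite_P: "finite P"
  and finite_block: "B \<in> P \<Longrightarrow> finite B"
  and nonempty_block: "B \<in> P \<Longrightarrow> B \<noteq> {}"
  and disjoint_blocks: "B \<in> P \<Longrightarrow> C \<in> P \<Longrightarrow> B \<noteq> C \<Longrightarrow> B \<inter> C = {}"
  using block_family by (auto simp: block_family_def)

lemma finite_S: "finite S" using subset finite_P finite_subset by blast

lemma Union_notin: "\<Union>S \<notin> P"
proof
  assume U: "\<Union>S \<in> P"
  have "S \<subseteq> {\<Union>S}"
  proof
    fix B assume "B \<in> S"
    then have B: "B \<in> P" "B \<subseteq> \<Union>S" using subset by auto
    then have "B \<inter> \<Union>S \<noteq> {}" using nonempty_block[OF B(1)] by blast
    then show "B \<in> {\<Union>S}" using disjoint_blocks[OF B(1) U] by auto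
  qed
  then have "card S \<le> 1" using card_mono[of "{\<Union>S}" S] by simp
  then show False using two_le_card by simp
qed

lemma singleton_in_merge: "{i} \<in> merge P S"
  using singleton_in subset by (auto simp: merge_def)

lemma merge_minus_singleton: "merge P S - {{i}} = insert (\<Union>S) ((P - {{i}}) - S)"
  using Union_notin singleton_in by (auto simp: merge_def)

lemma card_merge: "card (merge P S) = card P - card S + 1"
proof -
  have "card (merge P S) = Suc (card (P - S))"
    unfolding merge_def using Union_notin finite_P by (subst card_insert_disjoint) auto
  also have "card (P - S) = card P - card S" using subset finite_S by (intro card_Diff_subset) auto
  finally show ?thesis by simp
qed

lemma block_family_merge: "block_family (merge P S)"
proof -
  obtain B where "B \<in> S" using two_le_card by fastforce
  then have "B \<in> P" "B \<subseteq> \<Union>S" using subset by auto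
  then have "\<Union>S \<noteq> {}" using nonempty_block[of B] by blast
  moreover have "finite (\<Union>S)" using finite_S subset finite_block by auto
  moreover have "B \<inter> \<Union>S = {}" if "B \<in> P - S" for B
    using that subset disjoint_blocks by blast
  ultimately show ?thesis
    using finite_P finite_block nonempty_block disjoint_blocks
    unfolding block_family_def merge_def by auto
qed

lemma card_merged_subset:
  assumes "S \<subseteq> J" "J \<subseteq> P - {{i}}"
  shows "card (insert (\<Union>S) (J - S)) = card J - card S + 1"
proof -
  have "\<Union>S \<notin> J - S" "finite J" using assms Union_notin finite_P by (auto intro: finite_subset)
  then show ?thesis using assms(1) finite_S by (simp add: card_Diff_subset)
qed

lemma blocks_card_merged_subset:
  assumes "S \<subseteq> J" "J \<subseteq> P - {{i}}"
  shows "blocks_card (insert (\<Union>S) (J - S)) = blocks_card J"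
proof -
  have "\<Union>S \<notin> J - S" and fin: "finite J" using assms Union_notin finite_P by (auto intro: finite_subset)
  then have "blocks_card (insert (\<Union>S) (J - S)) = card (\<Union>S) + blocks_card (J - S)"
    by (simp add: blocks_card_def)
  also have "card (\<Union>S) = blocks_card S"
    using subset by (intro card_Union_block_family[OF block_family]) auto
  finally show ?thesis using assms(1) fin by (simp add: blocks_card_def sum.subset_diff[of S J])
qed

lemma sum_subsets_merge:
  "(\<Sum>J'\<in>{J'. J' \<subseteq> merge P S - {{i}} \<and> J' \<noteq> {}}.
       merge_weight (card (merge P S) - 1) (card J') * g (1 + blocks_card J'))
   = (\<Sum>J\<in>{J. J \<subseteq> P - {{i}} \<and> J \<noteq> {}}. weight_after_merge (card P - 1) S J * g (1 + blocks_card J))"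
proof -
  define A where "A = P - {{i}}"
  define r where "r = card A"
  define D where "D = {J. J \<subseteq> A \<and> J \<noteq> {} \<and> (S \<subseteq> J \<or> S \<inter> J = {})}"
  have SA: "S \<subseteq> A" using subset by (simp add: A_def)
  have fin: "finite A" using finite_P by (simp add: A_def)
  have S_ne: "S \<noteq> {}" using two_le_card by auto
  have r: "card P - 1 = r" "card (merge P S) - 1 = r - card S + 1"
    using card_merge singleton_in finite_P card_mono[OF fin SA] two_le_card by (auto simp: r_def A_def)
  have "(\<Sum>J'\<in>{J'. J' \<subseteq> merge P S - {{i}} \<and> J' \<noteq> {}}.
          merge_weight (card (merge P S) - 1) (card J') * g (1 + blocks_card J'))
      = (\<Sum>J\<in>D. (\<lambda>J'. merge_weight (r - card S + 1) (card J') * g (1 + blocks_card J'))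
                    (if S \<subseteq> J then insert (\<Union>S) (J - S) else J))"
    unfolding merge_minus_singleton r(2) D_def A_def[symmetric]
    using Union_notin SA S_ne by (intro sum_subsets_after_merge) (auto simp: A_def)
  also have "\<dots> = (\<Sum>J\<in>D. weight_after_merge r S J * g (1 + blocks_card J))"
  proof (rule sum.cong[OF refl])
    fix J assume "J \<in> D"
    then have "J \<subseteq> P - {{i}}" "S \<subseteq> J \<or> S \<inter> J = {}" by (auto simp: D_def A_def)
    then show "(\<lambda>J'. merge_weight (r - card S + 1) (card J') * g (1 + blocks_card J'))
          (if S \<subseteq> J then insert (\<Union>S) (J - S) else J)
        = weight_after_merge r S J * g (1 + blocks_card J)"
      by (auto simp: weight_after_merge_def card_merged_subset blocks_card_merged_subset)
  qed
  also have "\<dots> = (\<Sum>J\<in>{J. J \<subseteq> A \<and> J \<noteq> {}}. weight_after_merge r S J * g (1 + blocks_card J))"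
    using finite_subsets[OF fin] by (intro sum.mono_neutral_left) (auto simp: D_def weight_after_merge_def)
  finally show ?thesis unfolding r(1) A_def .
qed

end

lemma mergers_insert:
  assumes "finite A" "x \<notin> A"
  shows "mergers (insert x A) = insert x ` {J. J \<subseteq> A \<and> J \<noteq> {}} \<union> mergers A"
proof (intro equalityI subsetI)
  fix S assume "S \<in> mergers (insert x A)"
  then have S: "S \<subseteq> insert x A" "2 \<le> card S" by (auto simp: mergers_eq)
  show "S \<in> insert x ` {J. J \<subseteq> A \<and> J \<noteq> {}} \<union> mergers A"
  proof (cases "x \<in> S")
    case True
    have "S \<noteq> {x}" using S(2) by auto
    then have "S = insert x (S - {x})" "S - {x} \<subseteq> A" "S - {x} \<noteq> {}" using True S(1) by auto
    then show ?thesis by blast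
  next
    case False
    then show ?thesis using S by (auto simp: mergers_eq)
  qed
next
  fix S assume "S \<in> insert x ` {J. J \<subseteq> A \<and> J \<noteq> {}} \<union> mergers A"
  then show "S \<in> mergers (insert x A)"
  proof
    assume "S \<in> insert x ` {J. J \<subseteq> A \<and> J \<noteq> {}}"
    then obtain J where J: "J \<subseteq> A" "J \<noteq> {}" "S = insert x J" by auto
    then have "finite J" "x \<notin> J" using assms finite_subset by auto
    then have "card S = Suc (card J)" "card J \<ge> 1" using J by (auto simp: Suc_le_eq card_gt_0_iff)
    then show ?thesis using J by (auto simp: mergers_eq)
  qed (auto simp: mergers_eq)
qed

lemma clade_exp_Suc_eq:
  assumes P: "block_family P" "{i} \<in> P" "card P = Suc r" "r \<ge> 1"
  shows "clade_exp g (Suc m) P i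
     = (\<Sum>J\<in>{J. J \<subseteq> P - {{i}} \<and> J \<noteq> {}}. bs_rate (Suc r) (Suc (card J)) / real r * g (1 + blocks_card J))
       + (\<Sum>S\<in>mergers (P - {{i}}). bs_rate (Suc r) (card S) / real r * clade_exp g m (merge P S) i)"
proof -
  define A where "A = P - {{i}}"
  define Q where "Q = {J. J \<subseteq> A \<and> J \<noteq> {}}"
  define f where "f S = jump_prob P S * (if {i} \<in> S then g (card (\<Union>S)) else clade_exp g m (merge P S) i)" for S
  have fin: "finite A" "{i} \<notin> A" and P_eq: "P = insert {i} A"
    using P block_family_def by (auto simp: A_def)
  have jump: "jump_prob P S = bs_rate (Suc r) (card S) / real r" for S
    using total_rate_eq[of P] P fin by (simp add: jump_prob_def P_eq)
  have "mergers P = insert {i} ` Q \<union> mergers A"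
    unfolding P_eq mergers_insert[OF fin] Q_def ..
  then have "clade_exp g (Suc m) P i = (\<Sum>S\<in>insert {i} ` Q \<union> mergers A. f S)"
    by (simp add: f_def)
  also have "\<dots> = (\<Sum>S\<in>insert {i} ` Q. f S) + (\<Sum>S\<in>mergers A. f S)"
    using finite_subsets[OF fin(1)] fin by (intro sum.union_disjoint) (auto simp: Q_def mergers_eq)
  also have "(\<Sum>S\<in>insert {i} ` Q. f S) = (\<Sum>J\<in>Q. f (insert {i} J))"
  proof (intro sum.reindex[unfolded comp_def] inj_onI)
    fix X Y assume "X \<in> Q" "Y \<in> Q" "insert {i} X = insert {i} Y"
    then show "X = Y" using fin(2) insert_ident[of "{i}" X Y] by (auto simp: Q_def)
  qed
  also have "\<dots> = (\<Sum>J\<in>Q. bs_rate (Suc r) (Suc (card J)) / real r * g (1 + blocks_card J))"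
  proof (rule sum.cong[OF refl])
    fix J assume "J \<in> Q"
    then have J: "J \<subseteq> A" "finite J" "{i} \<notin> J" using fin finite_subset by (auto simp: Q_def)
    have "card (\<Union>(insert {i} J)) = blocks_card (insert {i} J)"
      using J P_eq by (intro card_Union_block_family[OF P(1)]) auto
    also have "\<dots> = 1 + blocks_card J" using J by (simp add: blocks_card_def)
    finally show "f (insert {i} J) = bs_rate (Suc r) (Suc (card J)) / real r * g (1 + blocks_card J)"
      using J by (simp add: f_def jump)
  qed
  also have "(\<Sum>S\<in>mergers A. f S)
      = (\<Sum>S\<in>mergers A. bs_rate (Suc r) (card S) / real r * clade_exp g m (merge P S) i)"
    by (rule sum.cong[OF refl]) (auto simp: f_def jump mergers_eq A_def)
  finally show ?thesis by (simp only: Q_def A_def)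
qed

lemma mergers_singleton: "mergers {B} = {}"
proof (rule equals0I)
  fix S assume "S \<in> mergers {B}"
  then have "S \<subseteq> {B}" "2 \<le> card S" by (auto simp: mergers_eq)
  then show False using card_mono[of "{B}" S] by simp
qed

lemma clade_exp_Suc_eq_merge_weight_sum:
  assumes P: "block_family P" "{i} \<in> P" "card P = Suc r" "r \<ge> 1"
    and after_merge: "\<And>S. S \<in> mergers (P - {{i}}) \<Longrightarrow> clade_exp g m (merge P S) i
        = (\<Sum>J\<in>{J. J \<subseteq> P - {{i}} \<and> J \<noteq> {}}. weight_after_merge r S J * g (1 + blocks_card J))"
  shows "clade_exp g (Suc m) P i
       = (\<Sum>J\<in>{J. J \<subseteq> P - {{i}} \<and> J \<noteq> {}}. merge_weight r (card J) * g (1 + blocks_card J))"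
proof -
  define A where "A = P - {{i}}"
  define Q where "Q = {J. J \<subseteq> A \<and> J \<noteq> {}}"
  let ?rate = "\<lambda>s. bs_rate (Suc r) s / real r"
  have fin: "finite A" and card_A: "card A = r"
    using P by (auto simp: A_def block_family_def)
  have "clade_exp g (Suc m) P i
      = (\<Sum>J\<in>Q. ?rate (Suc (card J)) * g (1 + blocks_card J))
        + (\<Sum>S\<in>mergers A. ?rate (card S) * clade_exp g m (merge P S) i)"
    using clade_exp_Suc_eq[OF P] by (simp add: Q_def A_def)
  also have "(\<Sum>S\<in>mergers A. ?rate (card S) * clade_exp g m (merge P S) i)
      = (\<Sum>S\<in>mergers A. \<Sum>J\<in>Q. ?rate (card S) * weight_after_merge r S J * g (1 + blocks_card J))"
    by (rule sum.cong[OF refl]) (simp add: after_merge Q_def A_def sum_distrib_left mult.assoc)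
  also have "\<dots> = (\<Sum>J\<in>Q. \<Sum>S\<in>mergers A. ?rate (card S) * weight_after_merge r S J * g (1 + blocks_card J))"
    by (rule sum.swap)
  also have "(\<Sum>J\<in>Q. ?rate (Suc (card J)) * g (1 + blocks_card J)) + \<dots>
      = (\<Sum>J\<in>Q. merge_weight r (card J) * g (1 + blocks_card J))"
    unfolding sum.distrib[symmetric]
  proof (rule sum.cong[OF refl])
    fix J assume "J \<in> Q"
    then have first_step:
      "?rate (Suc (card J)) + (\<Sum>S\<in>mergers A. ?rate (card S) * weight_after_merge r S J)
         = merge_weight r (card J)"
      using merge_weight_first_step[OF fin] by (simp add: Q_def card_A)
    show "?rate (Suc (card J)) * g (1 + blocks_card J)
        + (\<Sum>S\<in>mergers A. ?rate (card S) * weight_after_merge r S J * g (1 + blocks_card J))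
        = merge_weight r (card J) * g (1 + blocks_card J)"
      unfolding sum_distrib_right[symmetric] distrib_right[symmetric] first_step by (rule refl)
  qed
  finally show ?thesis by (simp add: Q_def A_def)
qed

lemma clade_exp_eq_merge_weight_sum:
  assumes "block_family P" "{i} \<in> P" "card P \<le> Suc m"
  shows "clade_exp g m P i
       = (\<Sum>J\<in>{J. J \<subseteq> P - {{i}} \<and> J \<noteq> {}}. merge_weight (card P - 1) (card J) * g (1 + blocks_card J))"
  using assms
proof (induction m arbitrary: P)
  case 0
  then have "finite P" by (simp add: block_family_def)
  then have "\<forall>a\<in>P. \<forall>b\<in>P. a = b" using card_le_Suc0_iff_eq 0(3) by auto
  then have "P - {{i}} = {}" using 0(2) by auto
  then have no_sets: "{J. J \<subseteq> P - {{i}} \<and> J \<noteq> {}} = {}" by auto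
  show ?case unfolding no_sets by simp
next
  case (Suc m)
  define A where "A = P - {{i}}"
  define r where "r = card A"
  have fin: "finite A" and P_eq: "P = insert {i} A"
    using Suc.prems by (auto simp: A_def block_family_def)
  have "{i} \<notin> A" by (simp add: A_def)
  with fin have card_P: "card P = Suc r" unfolding P_eq r_def by simp
  show ?case
  proof (cases "r = 0")
    case True
    then have "P = {{i}}" using fin P_eq by (simp add: r_def)
    then show ?thesis by (simp add: mergers_singleton)
  next
    case False
    have "clade_exp g m (merge P S) i
        = (\<Sum>J\<in>{J. J \<subseteq> P - {{i}} \<and> J \<noteq> {}}. weight_after_merge r S J * g (1 + blocks_card J))"
      if "S \<in> mergers (P - {{i}})" for S
    proof -
      interpret merger P i S
        using that Suc.prems by unfold_locales (auto simp: mergers_eq)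
      have "card (merge P S) \<le> Suc m" using card_merge two_le_card card_P Suc.prems(3) by simp
      then show ?thesis
        using Suc.IH[OF block_family_merge singleton_in_merge] sum_subsets_merge card_P by simp
    qed
    then show ?thesis
      using clade_exp_Suc_eq_merge_weight_sum[OF Suc.prems(1,2) card_P] False card_P by simp
  qed
qed

section \<open>The minimal clade size\<close>

lemma binomial_mult_merge_weight:
  assumes "1 \<le> s" "s \<le> r"
  shows "real (r choose s) * merge_weight r s = clade_coeff (r - s) / real s"
proof -
  have C: "real (r choose s) = fact r / (fact s * fact (r - s))" using assms by (simp add: binomial_fact)
  have fs: "(fact s :: real) = real s * fact (s - 1)" using assms by (simp add: fact_reduce)
  show ?thesis unfolding C merge_weight_fact fs using assms by (simp add: field_simps)
qed

lemma block_family_singletons: "block_family (singletons n)"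
  by (auto simp: block_family_def singletons_def)

lemma card_singletons: "card (singletons n) = n"
  unfolding singletons_def by (subst card_image) (auto simp: inj_on_def)

lemma clade_exp_singletons:
  assumes "i \<in> {1..n}"
  shows "clade_exp g n (singletons n) i = (\<Sum>s\<in>{1..<n}. clade_coeff (n - 1 - s) / real s * g (1 + s))"
proof -
  define A where "A = singletons n - {{i}}"
  have fin: "finite A" by (simp add: A_def singletons_def)
  have i_in: "{i} \<in> singletons n" using assms by (simp add: singletons_def)
  then have card_A: "card A = n - 1" by (simp add: A_def card_singletons)
  have blocks_card: "blocks_card J = card J" if "J \<subseteq> A" for J
  proof -
    have "\<forall>B\<in>J. card B = 1" using that by (auto simp: A_def singletons_def)
    then show ?thesis by (simp add: blocks_card_def)
  qed
  have "clade_exp g n (singletons n) i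
      = (\<Sum>J\<in>{J. J \<subseteq> A \<and> J \<noteq> {}}. merge_weight (n - 1) (card J) * g (1 + blocks_card J))"
    using clade_exp_eq_merge_weight_sum[OF block_family_singletons i_in, of n g]
    by (simp add: A_def card_singletons)
  also have "\<dots> = (\<Sum>J\<in>{J. J \<subseteq> A \<and> 1 \<le> card J}. merge_weight (n - 1) (card J) * g (1 + card J))"
  proof (rule sum.cong)
    show "{J. J \<subseteq> A \<and> J \<noteq> {}} = {J. J \<subseteq> A \<and> 1 \<le> card J}"
      using fin by (auto simp: Suc_le_eq card_gt_0_iff dest: finite_subset)
  qed (simp add: blocks_card)
  also have "\<dots> = (\<Sum>s\<in>{s. s \<le> n - 1 \<and> 1 \<le> s}. real ((n - 1) choose s) * (merge_weight (n - 1) s * g (1 + s)))"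
    using sum_subsets_by_card[OF fin, where h = "\<lambda>s. merge_weight (n - 1) s * g (1 + s)"] by (simp add: card_A)
  also have "{s. s \<le> n - 1 \<and> 1 \<le> s} = {1..<n}" using assms by auto
  also have "(\<Sum>s\<in>{1..<n}. real ((n - 1) choose s) * (merge_weight (n - 1) s * g (1 + s)))
      = (\<Sum>s\<in>{1..<n}. clade_coeff (n - 1 - s) / real s * g (1 + s))"
  proof (rule sum.cong[OF refl])
    fix s assume "s \<in> {1..<n}"
    then have "real ((n - 1) choose s) * merge_weight (n - 1) s = clade_coeff (n - 1 - s) / real s"
      by (intro binomial_mult_merge_weight) auto
    then show "real ((n - 1) choose s) * (merge_weight (n - 1) s * g (1 + s))
        = clade_coeff (n - 1 - s) / real s * g (1 + s)" by (simp only: mult.assoc[symmetric])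
  qed
  finally show ?thesis .
qed

lemma min_clade_exp_power:
  assumes "n \<ge> 1"
  shows "min_clade_exp n (\<lambda>x. real x ^ k) = weighted_moment_sum k n"
proof -
  have "clade_exp (\<lambda>x. real x ^ k) n (singletons n) i = weighted_moment_sum k n" if "i \<in> {1..n}" for i
    unfolding weighted_moment_sum_def clade_exp_singletons[OF that] by (auto intro!: sum.cong simp: add.commute)
  then show ?thesis using assms by (simp add: min_clade_exp_def)
qed

theorem theorem2p5:
  fixes k :: nat
  assumes "k \<ge> 1"
  shows "(\<lambda>n::nat. ln (real n) / real n ^ k * min_clade_exp n (\<lambda>x. real x ^ k))
           \<longlonglongrightarrow> 1 / real k"
proof -
  obtain q where k: "k = Suc q" using assms by (cases k) auto
  have eq: "\<forall>\<^sub>F n in sequentially. ln (real n) / real n ^ k * weighted_moment_sum k n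
      = ln (real n) / real n ^ k * min_clade_exp n (\<lambda>x. real x ^ k)"
    using eventually_ge_at_top[of 1] by eventually_elim (simp add: min_clade_exp_power)
  show ?thesis using tendsto_cong[OF eq] weighted_moment_sum_asymp[of q] k by simp
qed

end
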